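(* Let $d\ge1$ and $n\ge d+2$ be integers, and let $M$ be a $K_{d+2}$-matroid on $E(K_n)$. Then the rank of $M$ is at most $dn-\binom{d+1}{2}$.
   Context: A $K_{d+2}$-matroid on $E(K_n)$ is a matroid on the edge set of the complete graph $K_n$ in which the edge set of every copy of $K_{d+2}$ in $K_n$ is a circuit. *)

theory Defs
  imports Main
begin

definition matroid :: "'a set \<Rightarrow> ('a set \<Rightarrow> bool) \<Rightarrow> bool" where
  "matroid E indep \<longleftrightarrow>
     finite E \<and>
     (\<forall>X. indep X \<longrightarrow> X \<subseteq> E) \<and>
     indep {} \<and>
     (\<forall>X Y. indep Y \<and> X \<subseteq> Y \<longrightarrow> indep X) \<and>
     (\<forall>X Y. indep X \<and> indep Y \<and> card X < card Y \<longrightarrow>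
        (\<exists>y\<in>Y - X. indep (insert y X)))"

definition circuit :: "'a set \<Rightarrow> ('a set \<Rightarrow> bool) \<Rightarrow> 'a set \<Rightarrow> bool" where
  "circuit E indep C \<longleftrightarrow> C \<subseteq> E \<and> \<not> indep C \<and> (\<forall>D. D \<subset> C \<longrightarrow> indep D)"

definition matroid_rank :: "('a set \<Rightarrow> bool) \<Rightarrow> nat" where
  "matroid_rank indep = Max {card X | X. indep X}"

definition complete_edges :: "'v set \<Rightarrow> 'v set set" where
  "complete_edges V = {e. e \<subseteq> V \<and> card e = 2}"

definition K_matroid :: "nat \<Rightarrow> nat \<Rightarrow> (nat set set \<Rightarrow> bool) \<Rightarrow> bool" where
  "K_matroid d n indep \<longleftrightarrow>
     matroid (complete_edges {..<n}) indep \<and>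
     (\<forall>S. S \<subseteq> {..<n} \<and> card S = d + 2 \<longrightarrow>
        circuit (complete_edges {..<n}) indep (complete_edges S))"

end

theory Submission
  imports Defs
begin

text \<open>Fix a set \<open>A\<close> of \<open>d\<close> vertices and let \<open>F\<close> be the set of edges meeting \<open>A\<close>.
  Every edge \<open>y\<close> avoiding \<open>A\<close> lies in the copy of \<open>K\<^sub>d\<^sub>+\<^sub>2\<close> on \<open>A \<union> y\<close>, a circuit all of
  whose other edges lie in \<open>F\<close>; hence \<open>y\<close> is spanned by \<open>F\<close>, and the rank of the
  matroid is at most \<open>|F| = C(n,2) - C(n-d,2) = dn - C(d+1,2)\<close>.\<close>

lemma matroid_indep_finite:
  assumes "matroid E indep" and "indep X"
  shows "finite X"
  using assms unfolding matroid_def by (meson finite_subset)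

lemma matroid_augment_to_card:
  assumes m: "matroid E indep" and "indep X" and "indep Y"
  shows "\<exists>Z. indep Z \<and> X \<subseteq> Z \<and> Z \<subseteq> X \<union> Y \<and> card Y \<le> card Z"
  using assms(2,3)
proof (induction "card Y - card X" arbitrary: X rule: less_induct)
  case less
  show ?case
  proof (cases "card Y \<le> card X")
    case True
    then show ?thesis using less.prems by blast
  next
    case False
    then obtain y where y: "y \<in> Y - X" "indep (insert y X)"
      using m less.prems unfolding matroid_def by (meson not_le)
    have "card (insert y X) = Suc (card X)"
      using y matroid_indep_finite[OF m less.prems(1)] by simp
    then have "card Y - card (insert y X) < card Y - card X"
      using False by simp
    from less.hyps[OF this y(2) less.prems(2)] show ?thesis
      using y by blast
  qed
qed

lemma matroid_ex_max_card_indep_subset: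
  assumes "matroid E indep" and "finite F"
  obtains B where "B \<subseteq> F" "indep B" "\<And>Y. Y \<subseteq> F \<Longrightarrow> indep Y \<Longrightarrow> card Y \<le> card B"
proof -
  have "\<exists>B. (B \<subseteq> F \<and> indep B) \<and> (\<forall>Y. Y \<subseteq> F \<and> indep Y \<longrightarrow> card Y \<le> card B)"
  proof (rule ex_has_greatest_nat[where k = "{}" and b = "Suc (card F)"])
    show "{} \<subseteq> F \<and> indep {}"
      using assms(1) unfolding matroid_def by simp
    show "\<forall>Y. Y \<subseteq> F \<and> indep Y \<longrightarrow> card Y < Suc (card F)"
      using assms(2) card_mono by (auto simp: less_Suc_eq_le)
  qed
  then show ?thesis using that by blast
qed

text \<open>A maximum independent subset \<open>B\<close> of \<open>F\<close> cannot be augmented: an augmenting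
  element outside \<open>F\<close> would, through its circuit, yield a larger independent subset of \<open>F\<close>.\<close>

lemma matroid_card_indep_le_if_spanning_circuits:
  assumes m: "matroid E indep" and "F \<subseteq> E"
    and circuits: "\<And>y. y \<in> E - F \<Longrightarrow> \<exists>C. circuit E indep C \<and> y \<in> C \<and> C - {y} \<subseteq> F"
    and I: "indep I"
  shows "card I \<le> card F"
proof -
  have "finite F"
    using m \<open>F \<subseteq> E\<close> unfolding matroid_def by (meson finite_subset)
  then obtain B where BF: "B \<subseteq> F" and B: "indep B"
    and B_max: "\<And>Y. Y \<subseteq> F \<Longrightarrow> indep Y \<Longrightarrow> card Y \<le> card B"
    using matroid_ex_max_card_indep_subset[OF m] by blast
  have "card I \<le> card B"
  proof (rule ccontr)
    assume "\<not> card I \<le> card B"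
    then obtain y where y: "y \<in> I - B" and yB: "indep (insert y B)"
      using m B I unfolding matroid_def by (meson not_le)
    have card_yB: "card (insert y B) = Suc (card B)"
      using y matroid_indep_finite[OF m B] by simp
    show False
    proof (cases "y \<in> F")
      case True
      then show False using B_max[of "insert y B"] BF yB card_yB by simp
    next
      case False
      have "y \<in> E" using m I y unfolding matroid_def by blast
      then obtain C where C: "circuit E indep C" and "y \<in> C" and CF: "C - {y} \<subseteq> F"
        using circuits False by blast
      have "indep (C - {y})"
        using C \<open>y \<in> C\<close> unfolding circuit_def by blast
      then obtain Z where Z: "indep Z" "C - {y} \<subseteq> Z" "Z \<subseteq> (C - {y}) \<union> insert y B"
        and card_Z: "card (insert y B) \<le> card Z"
        using matroid_augment_to_card[OF m _ yB] by blast
      show False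
      proof (cases "y \<in> Z")
        case True
        then have "C \<subseteq> Z" using Z(2) by blast
        then show False
          using m Z(1) C unfolding matroid_def circuit_def by blast
      next
        case False
        then have "Z \<subseteq> F" using Z(3) CF BF by blast
        then show False using B_max[of Z] Z(1) card_Z card_yB by simp
      qed
    qed
  qed
  also have "card B \<le> card F"
    using card_mono[OF \<open>finite F\<close> BF] .
  finally show ?thesis .
qed

lemma matroid_rank_le:
  assumes "matroid E indep" and "\<And>X. indep X \<Longrightarrow> card X \<le> k"
  shows "matroid_rank indep \<le> k"
proof -
  have "{card X | X. indep X} \<subseteq> {..k}"
    using assms(2) by auto
  then have "finite {card X | X. indep X}"
    by (rule finite_subset) simp
  moreover have "indep {}"
    using assms(1) unfolding matroid_def by simp
  ultimately show ?thesis
    unfolding matroid_rank_def using assms(2) by (subst Max_le_iff) auto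
qed

lemma card_complete_edges:
  assumes "finite V"
  shows "card (complete_edges V) = card V choose 2"
  unfolding complete_edges_def using n_subsets[OF assms] .

lemma card_edges_meeting:
  assumes "finite V" and "A \<subseteq> V"
  shows "card {e \<in> complete_edges V. e \<inter> A \<noteq> {}} = (card V choose 2) - ((card V - card A) choose 2)"
proof -
  have edges_meeting: "{e \<in> complete_edges V. e \<inter> A \<noteq> {}} = complete_edges V - complete_edges (V - A)"
    and sub: "complete_edges (V - A) \<subseteq> complete_edges V"
    unfolding complete_edges_def by auto
  have "card (complete_edges V - complete_edges (V - A))
      = card (complete_edges V) - card (complete_edges (V - A))"
    using card_Diff_subset[OF finite_subset[OF sub] sub] assms(1)
    unfolding complete_edges_def by simp
  also have "\<dots> = (card V choose 2) - ((card V - card A) choose 2)"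
    using assms by (simp add: card_complete_edges card_Diff_subset finite_subset)
  finally show ?thesis
    unfolding edges_meeting .
qed

lemma double_choose_two: "2 * (m choose 2) = m * (m - 1)"
  by (cases "even m") (auto simp: choose_two elim!: evenE oddE)

lemma choose_two_diff:
  assumes "d \<le> (n::nat)"
  shows "(n choose 2) - ((n - d) choose 2) = d * n - ((d + 1) choose 2)"
proof -
  obtain k where n: "n = d + k"
    using assms le_Suc_ex by blast
  have "2 * (n choose 2) = 2 * ((n - d) choose 2) + 2 * (d * k) + 2 * (d choose 2)"
    unfolding double_choose_two n by (cases d; cases k) (simp_all add: algebra_simps)
  moreover have "2 * (d * n) = 2 * ((d + 1) choose 2) + 2 * (d * k) + 2 * (d choose 2)"
    unfolding double_choose_two n by (cases d) (simp_all add: algebra_simps)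
  ultimately show ?thesis
    by simp
qed

lemma complete_edges_Un_edge_meets:
  assumes "card y = 2" and "y \<inter> A = {}" and "e \<in> complete_edges (A \<union> y) - {y}"
  shows "e \<inter> A \<noteq> {}"
proof
  assume "e \<inter> A = {}"
  with assms have "e \<subseteq> y" and "card e = card y" and "e \<noteq> y"
    unfolding complete_edges_def by auto
  moreover have "finite y"
    using assms(1) by (auto intro: card_ge_0_finite)
  ultimately show False
    using card_subset_eq by blast
qed

lemma K_matroid_edge_in_circuit_meeting:
  assumes K: "K_matroid d n indep" and "A \<subseteq> {..<n}" and "card A = d"
    and y: "y \<in> complete_edges {..<n}" and "y \<inter> A = {}"
  shows "\<exists>C. circuit (complete_edges {..<n}) indep C \<and> y \<in> C \<and>
           C - {y} \<subseteq> {e \<in> complete_edges {..<n}. e \<inter> A \<noteq> {}}"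
proof (intro exI conjI)
  have "y \<subseteq> {..<n}" and "card y = 2"
    using y unfolding complete_edges_def by auto
  then have "A \<union> y \<subseteq> {..<n}" and "card (A \<union> y) = d + 2"
    using assms(2-5) by (auto simp: card_Un_disjoint finite_subset Int_commute)
  then show "circuit (complete_edges {..<n}) indep (complete_edges (A \<union> y))"
    using K unfolding K_matroid_def by blast
  show "y \<in> complete_edges (A \<union> y)"
    using \<open>card y = 2\<close> unfolding complete_edges_def by auto
  show "complete_edges (A \<union> y) - {y} \<subseteq> {e \<in> complete_edges {..<n}. e \<inter> A \<noteq> {}}"
    using \<open>A \<union> y \<subseteq> {..<n}\<close> complete_edges_Un_edge_meets[OF \<open>card y = 2\<close> \<open>y \<inter> A = {}\<close>]
    unfolding complete_edges_def by blast
qed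

theorem lemma4p1:
  fixes d n :: nat and indep :: "nat set set \<Rightarrow> bool"
  assumes "d \<ge> 1" and "n \<ge> d + 2"
    and "K_matroid d n indep"
  shows "matroid_rank indep \<le> d * n - ((d + 1) choose 2)"
proof -
  define A where "A = {..<d}"
  define F where "F = {e \<in> complete_edges {..<n}. e \<inter> A \<noteq> {}}"
  have m: "matroid (complete_edges {..<n}) indep"
    using assms(3) unfolding K_matroid_def by blast
  have A: "A \<subseteq> {..<n}" "card A = d"
    using assms(2) unfolding A_def by auto
  have "card X \<le> card F" if "indep X" for X
  proof (rule matroid_card_indep_le_if_spanning_circuits[OF m _ _ that])
    show "F \<subseteq> complete_edges {..<n}"
      unfolding F_def by blast
    show "\<exists>C. circuit (complete_edges {..<n}) indep C \<and> y \<in> C \<and> C - {y} \<subseteq> F"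
      if "y \<in> complete_edges {..<n} - F" for y
      using K_matroid_edge_in_circuit_meeting[OF assms(3) A, of y] that unfolding F_def by blast
  qed
  moreover have "card F = d * n - ((d + 1) choose 2)"
    using card_edges_meeting[of "{..<n}" A] choose_two_diff[of d n] A assms(2)
    unfolding F_def by simp
  ultimately show ?thesis
    using matroid_rank_le[OF m] by simp
qed

end
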